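(* In the setting of problem (P) under the standing assumptions, run Algorithm LCPG. Then: (1) the sequence $\{x^k\}$ is well defined (each subproblem has a nonempty feasible set intersected with $\mathrm{dom}\,\chi_0$), every $x^k$ is feasible for (P), and for every $k\ge0$ $$\tfrac{L_0}{2}\|x^{k+1}-x^k\|^2\le\psi_0(x^k)-\psi_0(x^{k+1});$$ in particular $\{\psi_0(x^k)\}$ is monotonically nonincreasing and $\lim_{k\to\infty}\psi_0(x^k)$ exists. (2) For every $k$ there exists a Lagrange multiplier $\lambda^{k+1}\in\mathbb{R}^m_+$ of the $k$-th subproblem.
   Context: Problem (P): minimize $\psi_0(x):=f_0(x)+\chi_0(x)$ over $x\in\mathbb{R}^d$ subject to $\psi_i(x):=f_i(x)+\chi_i(x)\le\eta_i$, $i\in[m]:=\{1,\dots,m\}$. Standing assumptions: $\chi_0$ is proper, convex, lower semicontinuous; each $\chi_i$ ($i\in[m]$) is convex and continuous on $\mathrm{dom}\,\chi_0$; each $f_i$ ($i=0,\dots,m$) is differentiable with $L_i$-Lipschitz gradient on $\mathrm{dom}\,\chi_0$; $L:=(L_1,\dots,L_m)^\top$; the optimal value $\psi_0^*$ of (P) is finite; the feasible set $\mathcal{X}:=\{x\in\mathrm{dom}\,\chi_0:\psi_i(x)\le\eta_i,\ i\in[m]\}$ is nonempty and compact. Write $\psi=(\psi_1,\dots,\psi_m)^\top$, $\eta=(\eta_1,\dots,\eta_m)^\top$; vector inequalities are componentwise. Subdifferential: $\partial\psi_i(x):=\nabla f_i(x)+\partial\chi_i(x)$ (convex subdifferential of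 $\chi_i$, Minkowski sum). Lagrangian $\mathcal{L}(x,\lambda)=\psi_0(x)+\sum_{i=1}^m\lambda_i(\psi_i(x)-\eta_i)$ and $\partial_x\mathcal{L}(x,\lambda):=\partial\psi_0(x)+\sum_i\lambda_i\partial\psi_i(x)$. For a set $S$, $\|S\|_-:=\inf\{\|s\|:s\in S\}$. Algorithm LCPG: given $x^0\in\mathrm{dom}\,\chi_0$ and $\eta^0\in\mathbb{R}^m$ with $\psi(x^0)<\eta^0<\eta$. For $k=0,1,\dots$: define for $i=0,\dots,m$ the function $\psi_i^k(x):=f_i(x^k)+\langle\nabla f_i(x^k),x-x^k\rangle+\frac{L_i}{2}\|x-x^k\|^2+\chi_i(x)$; let $x^{k+1}$ be the minimizer of $\psi_0^k(x)$ subject to $\psi_i^k(x)\le\eta_i^k$, $i\in[m]$ (the $k$-th subproblem); set $\eta^{k+1}=\eta^k+\delta^k$ with $\delta^k\in\mathbb{R}^m$, $\delta^k>0$, chosen so that $\eta^{k+1}<\eta$. A vector $\lambda^{k+1}\in\mathbb{R}^m_+$ is a Lagrange multiplier of the $k$-th subproblem if $0\in\partial\psi_0^k(x^{k+1})+\sum_i\lambda_i^{k+1}\partial\psi_i^k(x^{k+1})$ and $\lambda_i^{k+1}(\psi_i^k(x^{k+1})-\eta_i^k)=0$ for all $i\in[m]$, where $\partial\psi_i^k(x)=\nabla f_i(x^k)+L_i(x-x^k)+\partial\chi_i(x)$. *)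

theory Defs
  imports "HOL-Analysis.Analysis"
begin

definition edom :: "('a \<Rightarrow> ereal) \<Rightarrow> 'a set" where
  "edom h = {x. h x \<noteq> \<infinity>}"

definition proper_fun :: "('a \<Rightarrow> ereal) \<Rightarrow> bool" where
  "proper_fun h \<longleftrightarrow> (\<forall>x. h x \<noteq> -\<infinity>) \<and> edom h \<noteq> {}"

definition econvex :: "('a::real_vector \<Rightarrow> ereal) \<Rightarrow> bool" where
  "econvex h \<longleftrightarrow> convex (edom h) \<and> convex_on (edom h) (\<lambda>x. real_of_ereal (h x))"

definition elsc :: "('a::topological_space \<Rightarrow> ereal) \<Rightarrow> bool" where
  "elsc h \<longleftrightarrow> (\<forall>c::ereal. closed {x. h x \<le> c})"

definition esubdiff :: "('a::real_inner \<Rightarrow> ereal) \<Rightarrow> 'a \<Rightarrow> 'a set" where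
  "esubdiff h x = {g. \<forall>y. h x + ereal (g \<bullet> (y - x)) \<le> h y}"

definition psi0 :: "(nat \<Rightarrow> 'a \<Rightarrow> real) \<Rightarrow> ('a \<Rightarrow> ereal) \<Rightarrow> 'a \<Rightarrow> ereal" where
  "psi0 f chi0 x = ereal (f 0 x) + chi0 x"

definition psi :: "(nat \<Rightarrow> 'a \<Rightarrow> real) \<Rightarrow> (nat \<Rightarrow> 'a \<Rightarrow> real) \<Rightarrow> nat \<Rightarrow> 'a \<Rightarrow> real" where
  "psi f chi i x = f i x + chi i x"

definition feas_set ::
  "(nat \<Rightarrow> 'a \<Rightarrow> real) \<Rightarrow> ('a \<Rightarrow> ereal) \<Rightarrow> (nat \<Rightarrow> 'a \<Rightarrow> real) \<Rightarrow> (nat \<Rightarrow> real) \<Rightarrow> nat \<Rightarrow> 'a set" where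
  "feas_set f chi0 chi eta m = {x \<in> edom chi0. \<forall>i\<in>{1..m}. psi f chi i x \<le> eta i}"

definition qmodel ::
  "(nat \<Rightarrow> 'a::real_inner \<Rightarrow> real) \<Rightarrow> (nat \<Rightarrow> 'a \<Rightarrow> 'a) \<Rightarrow> (nat \<Rightarrow> real) \<Rightarrow> 'a \<Rightarrow> nat \<Rightarrow> 'a \<Rightarrow> real" where
  "qmodel f gradf L xk i x = f i xk + gradf i xk \<bullet> (x - xk) + L i / 2 * (norm (x - xk))\<^sup>2"

definition psi0k ::
  "(nat \<Rightarrow> 'a::real_inner \<Rightarrow> real) \<Rightarrow> (nat \<Rightarrow> 'a \<Rightarrow> 'a) \<Rightarrow> (nat \<Rightarrow> real) \<Rightarrow> ('a \<Rightarrow> ereal) \<Rightarrow> 'a \<Rightarrow> 'a \<Rightarrow> ereal" where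
  "psi0k f gradf L chi0 xk x = ereal (qmodel f gradf L xk 0 x) + chi0 x"

definition psik ::
  "(nat \<Rightarrow> 'a::real_inner \<Rightarrow> real) \<Rightarrow> (nat \<Rightarrow> 'a \<Rightarrow> 'a) \<Rightarrow> (nat \<Rightarrow> real) \<Rightarrow> (nat \<Rightarrow> 'a \<Rightarrow> real) \<Rightarrow> 'a \<Rightarrow> nat \<Rightarrow> 'a \<Rightarrow> real" where
  "psik f gradf L chi xk i x = qmodel f gradf L xk i x + chi i x"

definition sub_feas ::
  "(nat \<Rightarrow> 'a::real_inner \<Rightarrow> real) \<Rightarrow> (nat \<Rightarrow> 'a \<Rightarrow> 'a) \<Rightarrow> (nat \<Rightarrow> real) \<Rightarrow> ('a \<Rightarrow> ereal) \<Rightarrow>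
    (nat \<Rightarrow> 'a \<Rightarrow> real) \<Rightarrow> nat \<Rightarrow> 'a \<Rightarrow> (nat \<Rightarrow> real) \<Rightarrow> 'a set" where
  "sub_feas f gradf L chi0 chi m xk etak =
     {z \<in> edom chi0. \<forall>i\<in>{1..m}. psik f gradf L chi xk i z \<le> etak i}"

definition sub_min ::
  "(nat \<Rightarrow> 'a::real_inner \<Rightarrow> real) \<Rightarrow> (nat \<Rightarrow> 'a \<Rightarrow> 'a) \<Rightarrow> (nat \<Rightarrow> real) \<Rightarrow> ('a \<Rightarrow> ereal) \<Rightarrow>
    (nat \<Rightarrow> 'a \<Rightarrow> real) \<Rightarrow> nat \<Rightarrow> 'a \<Rightarrow> (nat \<Rightarrow> real) \<Rightarrow> 'a \<Rightarrow> bool" where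
  "sub_min f gradf L chi0 chi m xk etak z \<longleftrightarrow>
     z \<in> sub_feas f gradf L chi0 chi m xk etak \<and>
     (\<forall>y \<in> sub_feas f gradf L chi0 chi m xk etak.
        psi0k f gradf L chi0 xk z \<le> psi0k f gradf L chi0 xk y)"

text \<open>lam is a Lagrange multiplier of the subproblem (centre xk, levels etak) at its solution z:
  lam \<ge> 0, 0 \<in> d psi_0^k(z) + sum_i lam_i d psi_i^k(z) (Minkowski sum, unfolded via a
  choice of subgradients g_i), and complementary slackness.\<close>
definition sub_multiplier ::
  "(nat \<Rightarrow> 'a::real_inner \<Rightarrow> real) \<Rightarrow> (nat \<Rightarrow> 'a \<Rightarrow> 'a) \<Rightarrow> (nat \<Rightarrow> real) \<Rightarrow> ('a \<Rightarrow> ereal) \<Rightarrow>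
    (nat \<Rightarrow> 'a \<Rightarrow> real) \<Rightarrow> nat \<Rightarrow> 'a \<Rightarrow> (nat \<Rightarrow> real) \<Rightarrow> 'a \<Rightarrow> (nat \<Rightarrow> real) \<Rightarrow> bool" where
  "sub_multiplier f gradf L chi0 chi m xk etak z lam \<longleftrightarrow>
     (\<forall>i\<in>{1..m}. 0 \<le> lam i) \<and>
     (\<exists>g0 \<in> esubdiff chi0 z. \<exists>g. (\<forall>i\<in>{1..m}. g i \<in> esubdiff (\<lambda>y. ereal (chi i y)) z) \<and>
        (gradf 0 xk + L 0 *\<^sub>R (z - xk) + g0)
        + (\<Sum>i\<in>{1..m}. lam i *\<^sub>R (gradf i xk + L i *\<^sub>R (z - xk) + g i)) = 0) \<and>
     (\<forall>i\<in>{1..m}. lam i * (psik f gradf L chi xk i z - etak i) = 0)"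

end

theory Submission
  imports Defs
begin

text \<open>
  By the descent lemma the model \<psi>_i^k majorizes \<psi>_i on dom \<chi>_0 and agrees with it at
  x^k. Hence the feasible set of the k-th subproblem lies in the compact feasible set
  of (P), and as long as \<psi>(x^k) < \<eta>^k it contains x^k; a minimizer exists by lower
  semicontinuity, it satisfies \<psi>(x^{k+1}) \<le> \<eta>^k < \<eta>^{k+1}, and the invariant
  propagates. The subproblem objective is a quadratic of curvature L_0 plus a convex
  function, so its minimizer satisfies the three-point inequality, which at x^k is the
  sufficient decrease. Finally x^k is a Slater point of the convex subproblem, so convex
  duality yields multipliers for which x^{k+1} minimizes the Lagrangian over dom \<chi>_0;
  linearizing its smooth part and splitting the subdifferential of the remaining convex
  sum by a separating hyperplane gives the KKT conditions.
\<close>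

lemma le_of_le_add_scaled:
  fixes a b c :: real
  assumes "\<And>t. 0 < t \<Longrightarrow> t \<le> 1 \<Longrightarrow> a \<le> b + t * c"
  shows "a \<le> b"
proof (rule tendsto_lowerbound)
  show "((\<lambda>t. b + t * c) \<longlongrightarrow> b) (at_right 0)"
    by (auto intro!: tendsto_eq_intros)
  show "\<forall>\<^sub>F t in at_right 0. a \<le> b + t * c"
    using eventually_at_right_real[of 0 1] by (rule eventually_mono) (use assms in auto)
qed simp

lemma convex_sublevel_le:
  assumes "convex_on S g"
  shows "convex {x\<in>S. g x \<le> c}"
proof (rule convexI)
  fix x y and u v :: real
  assume x: "x \<in> {x\<in>S. g x \<le> c}" and y: "y \<in> {x\<in>S. g x \<le> c}"
    and uv: "0 \<le> u" "0 \<le> v" "u + v = 1"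
  have "u *\<^sub>R x + v *\<^sub>R y \<in> S"
    using convex_on_imp_convex[OF assms] x y uv by (auto dest: convexD)
  moreover have "g (u *\<^sub>R x + v *\<^sub>R y) \<le> u * g x + v * g y"
    using assms x y uv by (auto simp: convex_on_def)
  moreover have "u * g x + v * g y \<le> c"
    using x y uv by (auto intro: convex_bound_le)
  ultimately show "u *\<^sub>R x + v *\<^sub>R y \<in> {x\<in>S. g x \<le> c}" by simp
qed

lemma convex_sublevel_less:
  assumes "convex_on S g"
  shows "convex {x\<in>S. g x < c}"
proof (rule convexI)
  fix x y and u v :: real
  assume x: "x \<in> {x\<in>S. g x < c}" and y: "y \<in> {x\<in>S. g x < c}"
    and uv: "0 \<le> u" "0 \<le> v" "u + v = 1"
  have "u *\<^sub>R x + v *\<^sub>R y \<in> S"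
    using convex_on_imp_convex[OF assms] x y uv by (auto dest: convexD)
  moreover have "g (u *\<^sub>R x + v *\<^sub>R y) \<le> u * g x + v * g y"
    using assms x y uv by (auto simp: convex_on_def)
  moreover have "u * g x + v * g y < c"
    using x y uv by (auto intro: convex_bound_lt)
  ultimately show "u *\<^sub>R x + v *\<^sub>R y \<in> {x\<in>S. g x < c}" by simp
qed

lemma convex_on_weighted_sum:
  assumes "finite I" "convex S" "\<And>i. i \<in> I \<Longrightarrow> convex_on S (g i)" "\<And>i. i \<in> I \<Longrightarrow> 0 \<le> w i"
  shows "convex_on S (\<lambda>x. \<Sum>i\<in>I. w i * g i x)"
  using assms
  by (induction I rule: finite_induct) (simp_all add: convex_on_const convex_on_add convex_on_cmul)

definition quadratic :: "real \<Rightarrow> 'a::real_inner \<Rightarrow> real \<Rightarrow> 'a \<Rightarrow> 'a \<Rightarrow> real" where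
  "quadratic b p a c y = b + p \<bullet> (y - c) + a / 2 * (norm (y - c))\<^sup>2"

lemma quadratic_along_segment:
  "quadratic b p a c (z + t *\<^sub>R (y - z)) =
     quadratic b p a c z + t * ((p + a *\<^sub>R (z - c)) \<bullet> (y - z)) + t\<^sup>2 * (a / 2 * (norm (y - z))\<^sup>2)"
  unfolding quadratic_def power2_norm_eq_inner
  by (simp add: inner_commute algebra_simps power2_eq_square)

lemma quadratic_add:
  "quadratic b p a c y + quadratic b' p' a' c y = quadratic (b + b') (p + p') (a + a') c y"
  by (simp add: quadratic_def inner_add_left algebra_simps)

lemma quadratic_sum:
  assumes "finite I"
  shows "(\<Sum>i\<in>I. w i * quadratic (b i) (p i) (a i) c y) =
    quadratic (\<Sum>i\<in>I. w i * b i) (\<Sum>i\<in>I. w i *\<^sub>R p i) (\<Sum>i\<in>I. w i * a i) c y"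
  by (simp add: quadratic_def distrib_left sum.distrib inner_sum_left sum_distrib_right mult.assoc)

lemma convex_on_quadratic:
  assumes "convex S" "0 \<le> a"
  shows "convex_on S (quadratic b p a c)"
proof (rule convex_onI)
  fix x y and t :: real
  assume t: "0 < t" "t < 1"
  define G where "G = (p + a *\<^sub>R (x - c)) \<bullet> (y - x)"
  define R where "R = a / 2 * (norm (y - x))\<^sup>2"
  have Qy: "quadratic b p a c y = quadratic b p a c x + G + R"
    using quadratic_along_segment[of b p a c x 1 y] by (simp add: G_def R_def)
  have "(1 - t) *\<^sub>R x + t *\<^sub>R y = x + t *\<^sub>R (y - x)" by (simp add: algebra_simps)
  then have "quadratic b p a c ((1 - t) *\<^sub>R x + t *\<^sub>R y) = quadratic b p a c x + t * G + t\<^sup>2 * R"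
    by (simp add: quadratic_along_segment G_def R_def)
  also have "\<dots> \<le> quadratic b p a c x + t * G + t * R"
    using t assms(2) by (intro add_left_mono mult_right_mono) (auto simp: R_def power2_eq_square)
  also have "\<dots> = (1 - t) * quadratic b p a c x + t * quadratic b p a c y"
    unfolding Qy by (simp add: algebra_simps)
  finally show "quadratic b p a c ((1 - t) *\<^sub>R x + t *\<^sub>R y)
      \<le> (1 - t) * quadratic b p a c x + t * quadratic b p a c y" .
qed (fact assms(1))

lemma lipschitz_gradient_le_quadratic:
  fixes f :: "'a::real_inner \<Rightarrow> real"
  assumes D: "convex D" and x: "x \<in> D" and y: "y \<in> D"
    and deriv: "\<And>u. u \<in> D \<Longrightarrow> (f has_derivative (\<lambda>h. g u \<bullet> h)) (at u)"
    and lip: "L-lipschitz_on D g"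
  shows "f y \<le> quadratic (f x) (g x) L x y"
proof -
  define d where "d = y - x"
  define \<phi> where "\<phi> t = f (x + t *\<^sub>R d) - t * (g x \<bullet> d) - L / 2 * t\<^sup>2 * (norm d)\<^sup>2" for t
  have xt: "x + t *\<^sub>R d \<in> D" if "0 \<le> t" "t \<le> 1" for t
  proof -
    have "x + t *\<^sub>R d = (1 - t) *\<^sub>R x + t *\<^sub>R y" by (simp add: d_def algebra_simps)
    then show ?thesis using convexD_alt[OF D x y] that by simp
  qed
  have "\<phi> 1 \<le> \<phi> 0"
  proof (rule DERIV_nonpos_imp_nonincreasing[where f = \<phi>])
    fix t :: real assume t: "0 \<le> t" "t \<le> 1"
    have "((\<lambda>s. f (x + s *\<^sub>R d)) has_derivative (\<lambda>s. g (x + t *\<^sub>R d) \<bullet> (s *\<^sub>R d))) (at t)"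
      by (rule has_derivative_compose[where f = "\<lambda>s. x + s *\<^sub>R d", OF _ deriv[OF xt[OF t]]])
         (auto intro!: derivative_eq_intros)
    then have "((\<lambda>s. f (x + s *\<^sub>R d)) has_real_derivative g (x + t *\<^sub>R d) \<bullet> d) (at t)"
      by (simp add: has_field_derivative_def mult.commute[of _ "g (x + t *\<^sub>R d) \<bullet> d"])
    then have \<phi>': "(\<phi> has_real_derivative (g (x + t *\<^sub>R d) - g x) \<bullet> d - L * t * (norm d)\<^sup>2) (at t)"
      unfolding \<phi>_def by (auto intro!: derivative_eq_intros simp: inner_diff_left)
    have "(g (x + t *\<^sub>R d) - g x) \<bullet> d \<le> norm (g (x + t *\<^sub>R d) - g x) * norm d"
      by (rule norm_cauchy_schwarz)
    also have "\<dots> \<le> L * dist (x + t *\<^sub>R d) x * norm d"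
      using lipschitz_onD[OF lip xt[OF t] x] by (simp add: dist_norm mult_right_mono)
    also have "\<dots> = L * t * (norm d)\<^sup>2"
      using t by (simp add: dist_norm power2_eq_square)
    finally show "\<exists>y. (\<phi> has_real_derivative y) (at t) \<and> y \<le> 0"
      using \<phi>' by auto
  qed simp
  then show ?thesis by (simp add: \<phi>_def d_def quadratic_def)
qed

lemma quadratic_plus_convex_min_variational_ineq:
  assumes S: "convex S" and h: "convex_on S h" and z: "z \<in> S" and y: "y \<in> S"
    and min: "\<And>w. w \<in> S \<Longrightarrow> quadratic b p a c z + h z \<le> quadratic b p a c w + h w"
  shows "h z - (p + a *\<^sub>R (z - c)) \<bullet> (y - z) \<le> h y"
proof -
  define G where "G = (p + a *\<^sub>R (z - c)) \<bullet> (y - z)"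
  define R where "R = a / 2 * (norm (y - z))\<^sup>2"
  have "h z - G \<le> h y + t * R" if t: "0 < t" "t \<le> 1" for t
  proof -
    have w: "z + t *\<^sub>R (y - z) = (1 - t) *\<^sub>R z + t *\<^sub>R y" by (simp add: algebra_simps)
    have Qw: "quadratic b p a c (z + t *\<^sub>R (y - z)) = quadratic b p a c z + t * G + t\<^sup>2 * R"
      by (simp add: quadratic_along_segment G_def R_def)
    have "quadratic b p a c z + h z \<le> quadratic b p a c (z + t *\<^sub>R (y - z)) + h (z + t *\<^sub>R (y - z))"
      using min convexD_alt[OF S z y] t unfolding w by simp
    also have "h (z + t *\<^sub>R (y - z)) \<le> (1 - t) * h z + t * h y"
      unfolding w using convex_onD[OF h] t z y by simp
    finally have "0 \<le> t * (G + h y - h z + t * R)"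
      unfolding Qw by (simp add: algebra_simps power2_eq_square)
    then show ?thesis using t by (simp add: zero_le_mult_iff)
  qed
  then show ?thesis unfolding G_def by (rule le_of_le_add_scaled)
qed

lemma quadratic_plus_convex_min_three_point:
  assumes "convex S" "convex_on S h" "z \<in> S" "y \<in> S"
    and "\<And>w. w \<in> S \<Longrightarrow> quadratic b p a c z + h z \<le> quadratic b p a c w + h w"
  shows "quadratic b p a c z + h z + a / 2 * (norm (y - z))\<^sup>2 \<le> quadratic b p a c y + h y"
  using quadratic_plus_convex_min_variational_ineq[OF assms] quadratic_along_segment[of b p a c z 1 y]
  by simp

lemma convex_constrained_min_slope_le:
  fixes F G :: "'a::real_vector \<Rightarrow> real"
  assumes D: "convex D" and F: "convex_on D F" and G: "convex_on D G"
    and min: "\<And>y. y \<in> D \<Longrightarrow> G y \<le> 0 \<Longrightarrow> F z \<le> F y"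
    and y1: "y1 \<in> D" "0 < G y1" and y2: "y2 \<in> D" "G y2 < 0"
  shows "(F z - F y1) / G y1 \<le> (F y2 - F z) / (- G y2)"
proof -
  define t where "t = - G y2 / (G y1 - G y2)"
  have t: "0 \<le> t" "t \<le> 1" using y1 y2 by (auto simp: t_def field_simps)
  have scaled_t: "(G y1 - G y2) * t = - G y2" "(G y1 - G y2) * (1 - t) = G y1"
    using y1 y2 by (simp_all add: t_def field_simps)
  define w where "w = (1 - t) *\<^sub>R y2 + t *\<^sub>R y1"
  have w: "w \<in> D" unfolding w_def using convexD_alt[OF D y2(1) y1(1)] t by simp
  have "G w \<le> (1 - t) * G y2 + t * G y1" unfolding w_def using convex_onD[OF G] t y1 y2 by simp
  also have "(1 - t) * G y2 + t * G y1 = 0"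
    using y1 y2 scaled_t by (simp add: t_def field_simps)
  finally have "F z \<le> F w" using min w by blast
  also have "F w \<le> (1 - t) * F y2 + t * F y1" unfolding w_def using convex_onD[OF F] t y1 y2 by simp
  finally have "(G y1 - G y2) * F z \<le> (G y1 - G y2) * ((1 - t) * F y2 + t * F y1)"
    using y1 y2 by (intro mult_left_mono) auto
  also have "\<dots> = ((G y1 - G y2) * (1 - t)) * F y2 + ((G y1 - G y2) * t) * F y1"
    by (simp add: algebra_simps)
  also have "\<dots> = G y1 * F y2 - G y2 * F y1"
    unfolding scaled_t by simp
  finally show ?thesis using y1 y2 by (simp add: field_simps)
qed

text \<open>The multiplier is the supremum of the slopes \<open>(F z - F y) / G y\<close> over infeasible \<open>y\<close>,
  bounded by the previous lemma through the Slater point.\<close>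

lemma convex_slater_multiplier:
  fixes F G :: "'a::real_vector \<Rightarrow> real"
  assumes D: "convex D" and F: "convex_on D F" and G: "convex_on D G"
    and slater: "a \<in> D" "G a < 0" and z: "z \<in> D" "G z \<le> 0"
    and min: "\<And>y. y \<in> D \<Longrightarrow> G y \<le> 0 \<Longrightarrow> F z \<le> F y"
  shows "\<exists>\<mu>\<ge>0. \<mu> * G z = 0 \<and> (\<forall>y\<in>D. F z \<le> F y + \<mu> * G y)"
proof -
  define A where "A = insert 0 {(F z - F y) / G y | y. y \<in> D \<and> 0 < G y}"
  define \<mu> where "\<mu> = Sup A"
  have A_le: "r \<le> (F y - F z) / (- G y)" if "r \<in> A" "y \<in> D" "G y < 0" for r y
  proof -
    have "0 \<le> (F y - F z) / (- G y)" using min[of y] that by (simp add: divide_simps)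
    then show ?thesis
      using that convex_constrained_min_slope_le[OF D F G min] unfolding A_def by auto
  qed
  have bdd: "bdd_above A" using A_le[OF _ slater] by (auto simp: bdd_above_def)
  have \<mu>_nonneg: "0 \<le> \<mu>" unfolding \<mu>_def using cSup_upper[OF _ bdd, of 0] by (simp add: A_def)
  have \<mu>_le: "\<mu> \<le> (F y - F z) / (- G y)" if "y \<in> D" "G y < 0" for y
    unfolding \<mu>_def using A_le that by (intro cSup_least) (auto simp: A_def)
  have \<mu>_ge: "(F z - F y) / G y \<le> \<mu>" if "y \<in> D" "0 < G y" for y
    unfolding \<mu>_def using that by (intro cSup_upper[OF _ bdd]) (auto simp: A_def)
  have "\<mu> * G z = 0"
  proof (cases "G z < 0")
    case True
    then show ?thesis using \<mu>_le[OF z(1)] \<mu>_nonneg by simp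
  qed (use z in simp)
  moreover have "F z \<le> F y + \<mu> * G y" if y: "y \<in> D" for y
  proof (cases "G y" "0::real" rule: linorder_cases)
    case less then show ?thesis using \<mu>_le[OF y less] by (simp add: divide_simps mult.commute)
  next
    case equal then show ?thesis using min y by simp
  next
    case greater then show ?thesis using \<mu>_ge[OF y greater] by (simp add: divide_simps mult.commute)
  qed
  ultimately show ?thesis using \<mu>_nonneg by blast
qed

lemma convex_slater_multipliers:
  fixes F :: "'a::real_vector \<Rightarrow> real" and G :: "'i \<Rightarrow> 'a \<Rightarrow> real"
  assumes I: "finite I" and D: "convex D" and F: "convex_on D F"
    and G: "\<And>i. i \<in> I \<Longrightarrow> convex_on D (G i)"
    and slater: "a \<in> D" "\<And>i. i \<in> I \<Longrightarrow> G i a < 0"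
    and z: "z \<in> D" "\<And>i. i \<in> I \<Longrightarrow> G i z \<le> 0"
    and min: "\<And>y. y \<in> D \<Longrightarrow> (\<forall>i\<in>I. G i y \<le> 0) \<Longrightarrow> F z \<le> F y"
  shows "\<exists>lam. (\<forall>i\<in>I. 0 \<le> lam i \<and> lam i * G i z = 0) \<and> (\<forall>y\<in>D. F z \<le> F y + (\<Sum>i\<in>I. lam i * G i y))"
  using I F G slater(2) z(2) min
proof (induction I arbitrary: F rule: finite_induct)
  case empty
  then show ?case by auto
next
  case (insert j I F)
  define D' where "D' = {y\<in>D. \<forall>i\<in>I. G i y \<le> 0}"
  have "D' = D \<inter> (\<Inter>i\<in>I. {y\<in>D. G i y \<le> 0})" by (auto simp: D'_def)
  then have D': "convex D'"
    using D insert.prems(2) by (auto intro!: convex_Int convex_INT convex_sublevel_le)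
  have "D' \<subseteq> D" by (auto simp: D'_def)
  then have "\<exists>\<mu>\<ge>0. \<mu> * G j z = 0 \<and> (\<forall>y\<in>D'. F z \<le> F y + \<mu> * G j y)"
    using insert.prems slater(1) z(1)
    by (intro convex_slater_multiplier[OF D' convex_on_subset[OF insert.prems(1) _ D']
        convex_on_subset[OF insert.prems(2)[OF insertI1] _ D'], where a = a])
      (auto simp: D'_def less_imp_le)
  then obtain \<mu> where \<mu>: "0 \<le> \<mu>" "\<mu> * G j z = 0" "\<forall>y\<in>D'. F z \<le> F y + \<mu> * G j y"
    by blast
  define F' where "F' y = F y + \<mu> * G j y" for y
  have "convex_on D F'"
    unfolding F'_def using insert.prems(1,2) \<mu>(1) by (intro convex_on_add convex_on_cmul) auto
  then obtain lam where lam: "\<forall>i\<in>I. 0 \<le> lam i \<and> lam i * G i z = 0"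
    "\<forall>y\<in>D. F' z \<le> F' y + (\<Sum>i\<in>I. lam i * G i y)"
    using insert.IH[of F'] insert.prems \<mu> by (fastforce simp: F'_def D'_def)
  have "(\<Sum>i\<in>insert j I. (lam(j := \<mu>)) i * G i y) = \<mu> * G j y + (\<Sum>i\<in>I. lam i * G i y)" for y
    using insert.hyps by (auto intro: sum.cong)
  then show ?case
    using lam \<mu> insert.hyps by (intro exI[of _ "lam(j := \<mu>)"]) (auto simp: F'_def)
qed

text \<open>Separate the epigraph of \<open>C - C z\<close> over \<open>D\<close> from the strict hypograph of \<open>k z - k\<close>;
  both touch \<open>(z, 0)\<close>, which therefore lies on the hyperplane.\<close>

lemma convex_sum_min_separation:
  fixes C k :: "'a::euclidean_space \<Rightarrow> real"
  assumes D: "convex D" and C: "convex_on D C" and z: "z \<in> D" and k: "convex_on UNIV k"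
    and min: "\<And>y. y \<in> D \<Longrightarrow> C z + k z \<le> C y + k y"
  obtains w \<beta> where "(w, \<beta>) \<noteq> 0"
    "\<And>y r. y \<in> D \<Longrightarrow> C y - C z \<le> r \<Longrightarrow> w \<bullet> z \<le> w \<bullet> y + \<beta> * r"
    "\<And>y r. r < k z - k y \<Longrightarrow> w \<bullet> y + \<beta> * r \<le> w \<bullet> z"
proof -
  define S where "S = epigraph D (\<lambda>y. C y - C z)"
  define T where "T = {p\<in>UNIV. k (fst p) + snd p < k z}"
  have "convex_on D (\<lambda>y. C y - C z)"
    using C D by (auto intro: convex_on_diff simp: concave_on_const)
  then have S_convex: "convex S" unfolding S_def by (rule convex_epigraphI)
  have "convex_on UNIV (\<lambda>p::'a \<times> real. k (fst p) + snd p)"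
    using k by (auto simp: convex_on_def algebra_simps)
  then have T_convex: "convex T" unfolding T_def by (rule convex_sublevel_less)
  have "(z, 0) \<in> S" "(z, -1) \<in> T" using z by (auto simp: S_def T_def mem_epigraph)
  moreover have "T \<inter> S = {}"
    using min by (fastforce simp: S_def T_def epigraph_def)
  ultimately obtain a b where sep: "a \<noteq> 0" "\<forall>p\<in>T. a \<bullet> p \<le> b" "\<forall>p\<in>S. b \<le> a \<bullet> p"
    using separating_hyperplane_sets[OF T_convex S_convex] by blast
  obtain w \<beta> where a: "a = (w, \<beta>)" by fastforce
  have T_le: "w \<bullet> y + \<beta> * r \<le> b" if "r < k z - k y" for y r
  proof -
    have "(y, r) \<in> T" using that by (simp add: T_def)
    then show ?thesis using sep(2) by (auto simp: a)
  qed
  have S_ge: "b \<le> w \<bullet> y + \<beta> * r" if "y \<in> D" "C y - C z \<le> r" for y r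
  proof -
    have "(y, r) \<in> S" using that by (simp add: S_def mem_epigraph)
    then show ?thesis using sep(3) by (auto simp: a)
  qed
  have "w \<bullet> z \<le> b + t * \<beta>" if "0 < t" for t
    using T_le[of "- t" z] that by (simp add: algebra_simps)
  then have "w \<bullet> z = b"
    using S_ge[OF z, of 0] le_of_le_add_scaled[of "w \<bullet> z" b \<beta>] by fastforce
  then show ?thesis
    using that[of w \<beta>] sep(1) a T_le S_ge by blast
qed

lemma convex_subgradient_sum_rule:
  fixes C k :: "'a::euclidean_space \<Rightarrow> real"
  assumes D: "convex D" and C: "convex_on D C" and z: "z \<in> D" and k: "convex_on UNIV k"
    and min: "\<And>y. y \<in> D \<Longrightarrow> C z + k z \<le> C y + k y"
  shows "\<exists>v. (\<forall>y\<in>D. C z - v \<bullet> (y - z) \<le> C y) \<and> (\<forall>y. k z + v \<bullet> (y - z) \<le> k y)"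
proof -
  obtain w \<beta> where nonzero: "(w, \<beta>) \<noteq> 0"
    and C_side: "\<And>y r. y \<in> D \<Longrightarrow> C y - C z \<le> r \<Longrightarrow> w \<bullet> z \<le> w \<bullet> y + \<beta> * r"
    and k_side: "\<And>y r. r < k z - k y \<Longrightarrow> w \<bullet> y + \<beta> * r \<le> w \<bullet> z"
    using convex_sum_min_separation[OF assms] by blast
  have \<beta>_nonneg: "0 \<le> \<beta>" using C_side[OF z, of 1] by simp
  have \<beta>_pos: "0 < \<beta>"
  proof (rule ccontr)
    assume "\<not> 0 < \<beta>"
    with \<beta>_nonneg nonzero have "\<beta> = 0" "w \<noteq> 0" by (auto simp: zero_prod_def)
    then have "w \<bullet> (z + w) \<le> w \<bullet> z" using k_side[of "k z - k (z + w) - 1" "z + w"] by simp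
    then show False using \<open>w \<noteq> 0\<close> by (simp add: inner_add_right) (metis inner_gt_zero_iff not_le)
  qed
  define v where "v = (1 / \<beta>) *\<^sub>R w"
  have v_inner: "v \<bullet> (y - z) = (w \<bullet> y - w \<bullet> z) / \<beta>" for y
    by (simp add: v_def inner_diff_right diff_divide_distrib)
  show ?thesis
  proof (intro exI[of _ v] conjI allI ballI)
    fix y assume "y \<in> D"
    then have "w \<bullet> z \<le> w \<bullet> y + \<beta> * (C y - C z)" by (rule C_side) simp
    then show "C z - v \<bullet> (y - z) \<le> C y"
      using \<beta>_pos by (simp add: v_inner field_simps)
  next
    fix y
    have "w \<bullet> y \<le> w \<bullet> z + \<beta> * (k y - k z) + t * \<beta>" if "0 < t" "t \<le> 1" for t
      using k_side[of "k z - k y - t" y] that by (simp add: algebra_simps)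
    then have "w \<bullet> y \<le> w \<bullet> z + \<beta> * (k y - k z)" by (rule le_of_le_add_scaled)
    then show "k z + v \<bullet> (y - z) \<le> k y"
      using \<beta>_pos by (simp add: v_inner field_simps)
  qed
qed

lemma convex_on_UNIV_subgradient_exists:
  fixes k :: "'a::euclidean_space \<Rightarrow> real"
  assumes "convex_on UNIV k"
  obtains g where "\<And>y. k z + g \<bullet> (y - z) \<le> k y"
  using convex_subgradient_sum_rule[of "{z}" "\<lambda>_. 0" z k] assms by (auto simp: convex_on_const)

lemma subgradient_of_scaled:
  fixes k :: "'a::euclidean_space \<Rightarrow> real"
  assumes k: "convex_on UNIV k" and c: "0 \<le> c"
    and v: "\<And>y. c * k z + v \<bullet> (y - z) \<le> c * k y"
  obtains g where "\<And>y. k z + g \<bullet> (y - z) \<le> k y" "c *\<^sub>R g = v"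
proof (cases "c = 0")
  case True
  have "v \<bullet> v \<le> 0" using v[of "z + v"] True by simp
  then have "v = 0" by (metis inner_gt_zero_iff not_le)
  then show ?thesis
    using that True convex_on_UNIV_subgradient_exists[OF k] by (metis scale_zero_left)
next
  case False
  with c have "0 < c" by simp
  show ?thesis
  proof (rule that[of "(1 / c) *\<^sub>R v"])
    fix y
    have "v \<bullet> (y - z) \<le> c * (k y - k z)" using v[of y] by (simp add: algebra_simps)
    then show "k z + ((1 / c) *\<^sub>R v) \<bullet> (y - z) \<le> k y" using \<open>0 < c\<close> by (simp add: field_simps)
  qed (use \<open>0 < c\<close> in simp)
qed

lemma convex_subgradient_sum_rule_finite:
  fixes C :: "'a::euclidean_space \<Rightarrow> real" and k :: "'i \<Rightarrow> 'a \<Rightarrow> real"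
  assumes I: "finite I" and D: "convex D" and C: "convex_on D C" and z: "z \<in> D"
    and k: "\<And>i. i \<in> I \<Longrightarrow> convex_on UNIV (k i)" and lam: "\<And>i. i \<in> I \<Longrightarrow> 0 \<le> lam i"
    and min: "\<And>y. y \<in> D \<Longrightarrow>
      C z + p \<bullet> z + (\<Sum>i\<in>I. lam i * k i z) \<le> C y + p \<bullet> y + (\<Sum>i\<in>I. lam i * k i y)"
  shows "\<exists>g0 g. (\<forall>y\<in>D. C z + g0 \<bullet> (y - z) \<le> C y) \<and> (\<forall>i\<in>I. \<forall>y. k i z + g i \<bullet> (y - z) \<le> k i y)
    \<and> p + g0 + (\<Sum>i\<in>I. lam i *\<^sub>R g i) = 0"
  using I k lam min
proof (induction I arbitrary: p rule: finite_induct)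
  case empty
  then have "\<forall>y\<in>D. C z + (- p) \<bullet> (y - z) \<le> C y" by (force simp: inner_diff_right)
  then show ?case by (intro exI[of _ "- p"]) simp
next
  case (insert j I p)
  define C' where "C' y = C y + p \<bullet> y + (\<Sum>i\<in>I. lam i * k i y)" for y
  have "convex_on D (\<lambda>y. \<Sum>i\<in>I. lam i * k i y)"
    using insert.hyps(1) insert.prems(1,2) D
    by (intro convex_on_weighted_sum) (auto intro: convex_on_subset)
  moreover have "convex_on D (\<lambda>y. p \<bullet> y)"
    using D by (auto intro: convex_onI simp: algebra_simps)
  ultimately have "convex_on D C'"
    unfolding C'_def using C by (intro convex_on_add)
  moreover have "convex_on UNIV (\<lambda>y. lam j * k j y)"
    using insert.prems(1,2) by (intro convex_on_cmul) auto
  moreover have "C' z + lam j * k j z \<le> C' y + lam j * k j y" if "y \<in> D" for y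
    using insert.prems(3)[OF that] insert.hyps by (simp add: C'_def algebra_simps)
  ultimately obtain v where v_C': "\<forall>y\<in>D. C' z - v \<bullet> (y - z) \<le> C' y"
    and v_kj: "\<forall>y. lam j * k j z + v \<bullet> (y - z) \<le> lam j * k j y"
    using convex_subgradient_sum_rule[OF D _ z] by blast
  obtain gj where gj: "\<And>y. k j z + gj \<bullet> (y - z) \<le> k j y" and gj_v: "lam j *\<^sub>R gj = v"
    using subgradient_of_scaled[of "k j" "lam j" z v] insert.prems(1,2) v_kj by auto
  have "\<forall>y\<in>D. C z + (p + v) \<bullet> z + (\<Sum>i\<in>I. lam i * k i z) \<le> C y + (p + v) \<bullet> y + (\<Sum>i\<in>I. lam i * k i y)"
    using v_C' by (auto simp: C'_def algebra_simps)
  then obtain g0 g where g0: "\<forall>y\<in>D. C z + g0 \<bullet> (y - z) \<le> C y"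
    and g: "\<forall>i\<in>I. \<forall>y. k i z + g i \<bullet> (y - z) \<le> k i y"
    and sum_zero: "(p + v) + g0 + (\<Sum>i\<in>I. lam i *\<^sub>R g i) = 0"
    using insert.IH[of "p + v"] insert.prems(1,2) by auto
  have "(\<Sum>i\<in>insert j I. lam i *\<^sub>R (g(j := gj)) i) = v + (\<Sum>i\<in>I. lam i *\<^sub>R g i)"
    using insert.hyps gj_v by (auto intro: sum.cong)
  then show ?case
    using g0 g gj sum_zero by (intro exI[of _ g0] exI[of _ "g(j := gj)"]) (auto simp: algebra_simps)
qed

lemma ereal_less_add_iff:
  fixes c :: ereal
  shows "ereal r < ereal q + c \<longleftrightarrow> (\<exists>s. ereal s < c \<and> r - s < q)"
proof -
  have "ereal r < ereal q + c \<longleftrightarrow> ereal (r - q) < c"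
    by (cases c) auto
  also have "\<dots> \<longleftrightarrow> (\<exists>s. ereal s < c \<and> r - s < q)"
  proof
    assume "ereal (r - q) < c"
    then obtain s where "ereal (r - q) < ereal s" "ereal s < c" using ereal_dense2 by blast
    then show "\<exists>s. ereal s < c \<and> r - s < q" by auto
  next
    assume "\<exists>s. ereal s < c \<and> r - s < q"
    then obtain s where "ereal s < c" "ereal (r - q) < ereal s" by auto
    then show "ereal (r - q) < c" using less_trans by blast
  qed
  finally show ?thesis .
qed

lemma elsc_add_continuous:
  fixes q :: "'a::topological_space \<Rightarrow> real" and C :: "'a \<Rightarrow> ereal"
  assumes q: "continuous_on UNIV q" and C: "elsc C"
  shows "elsc (\<lambda>x. ereal (q x) + C x)"
  unfolding elsc_def
proof
  fix c :: ereal
  show "closed {x. ereal (q x) + C x \<le> c}"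
  proof (cases c)
    case (real r)
    have "open {x. ereal s < C x}" for s
    proof -
      have "{x. ereal s < C x} = - {x. C x \<le> ereal s}" by (auto simp: not_le)
      then show ?thesis using C by (simp add: elsc_def open_Compl)
    qed
    moreover have "open {x. r - s < q x}" for s
      using q by (intro open_Collect_less continuous_on_const)
    ultimately have "open (\<Union>s. {x. ereal s < C x} \<inter> {x. r - s < q x})" by auto
    moreover have "{x. ereal (q x) + C x \<le> c} = - (\<Union>s. {x. ereal s < C x} \<inter> {x. r - s < q x})"
      using ereal_less_add_iff[of r] by (auto simp: real simp flip: not_less)
    ultimately show ?thesis by (simp add: closed_def)
  next
    case PInf
    then show ?thesis by simp
  next
    case MInf
    have "{x. ereal (q x) + C x \<le> c} = {x. C x \<le> -\<infinity>}"
      using MInf by (auto elim: ereal_cases[of "C _"])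
    then show ?thesis using C unfolding elsc_def by metis
  qed
qed

lemma compact_closed_sublevels_attains_min:
  fixes h :: "'a::topological_space \<Rightarrow> 'b::linorder"
  assumes K: "compact K" "K \<noteq> {}" and closed: "\<And>c. closed {x\<in>K. h x \<le> c}"
  obtains z where "z \<in> K" "\<And>y. y \<in> K \<Longrightarrow> h z \<le> h y"
proof -
  have "K \<inter> (\<Inter>y\<in>K. {x\<in>K. h x \<le> h y}) \<noteq> {}"
  proof (rule compact_imp_fip_image[OF K(1)])
    fix J assume J: "finite J" "J \<subseteq> K"
    show "K \<inter> (\<Inter>y\<in>J. {x\<in>K. h x \<le> h y}) \<noteq> {}"
    proof (cases "J = {}")
      case False
      have "Min (h ` J) \<in> h ` J" using J False by (intro Min_in) auto
      then obtain y0 where "y0 \<in> J" "h y0 = Min (h ` J)" by auto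
      then have "y0 \<in> K \<inter> (\<Inter>y\<in>J. {x\<in>K. h x \<le> h y})" using J by auto
      then show ?thesis by blast
    qed (use K in simp)
  qed (use closed in blast)
  then show ?thesis using that by blast
qed


locale lcpg_problem =
  fixes f :: "nat \<Rightarrow> 'a::euclidean_space \<Rightarrow> real" and gradf :: "nat \<Rightarrow> 'a \<Rightarrow> 'a"
    and L :: "nat \<Rightarrow> real" and chi0 :: "'a \<Rightarrow> ereal" and chi :: "nat \<Rightarrow> 'a \<Rightarrow> real"
    and eta :: "nat \<Rightarrow> real" and m :: nat
  assumes chi0_proper: "proper_fun chi0"
    and chi0_convex: "econvex chi0"
    and chi0_lsc: "elsc chi0"
    and chi_convex: "\<And>i. i \<in> {1..m} \<Longrightarrow> convex_on UNIV (chi i)"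
    and chi_cont: "\<And>i. i \<in> {1..m} \<Longrightarrow> continuous_on (edom chi0) (chi i)"
    and f_deriv: "\<And>i x. i \<in> {0..m} \<Longrightarrow> x \<in> edom chi0 \<Longrightarrow> (f i has_derivative (\<lambda>h. gradf i x \<bullet> h)) (at x)"
    and gradf_lipschitz: "\<And>i. i \<in> {0..m} \<Longrightarrow> (L i)-lipschitz_on (edom chi0) (gradf i)"
    and feas_compact: "compact (feas_set f chi0 chi eta m)"
begin

abbreviation "dom0 \<equiv> edom chi0"
abbreviation "feasible \<equiv> feas_set f chi0 chi eta m"
abbreviation "model \<equiv> qmodel f gradf L"
abbreviation "subfeas \<equiv> sub_feas f gradf L chi0 chi m"
abbreviation "submin \<equiv> sub_min f gradf L chi0 chi m"

text \<open>Outside \<open>dom0\<close> the value of \<open>chi0r\<close> is junk (\<open>real_of_ereal \<infinity> = 0\<close>).\<close>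

definition chi0r :: "'a \<Rightarrow> real" where
  "chi0r x = real_of_ereal (chi0 x)"

lemma chi0_eq_ereal: "x \<in> dom0 \<Longrightarrow> chi0 x = ereal (chi0r x)"
  using chi0_proper by (cases "chi0 x") (auto simp: chi0r_def edom_def proper_fun_def)

lemma psi0_eq: "x \<in> dom0 \<Longrightarrow> psi0 f chi0 x = ereal (f 0 x + chi0r x)"
  by (simp add: psi0_def chi0_eq_ereal)

lemma psi0k_eq: "x \<in> dom0 \<Longrightarrow> psi0k f gradf L chi0 xk x = ereal (model xk 0 x + chi0r x)"
  by (simp add: psi0k_def chi0_eq_ereal)

lemma convex_dom0: "convex dom0"
  using chi0_convex by (simp add: econvex_def)

lemma convex_on_chi0r: "convex_on dom0 chi0r"
  using chi0_convex by (simp add: econvex_def chi0r_def[abs_def])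

lemma L_nonneg: "i \<in> {0..m} \<Longrightarrow> 0 \<le> L i"
  using gradf_lipschitz by (rule lipschitz_on_nonneg)

lemma model_eq_quadratic: "model xk i = quadratic (f i xk) (gradf i xk) (L i) xk"
  by (auto simp: qmodel_def quadratic_def)

lemma model_self: "model xk i xk = f i xk"
  by (simp add: qmodel_def)

lemma f_le_model: "i \<in> {0..m} \<Longrightarrow> xk \<in> dom0 \<Longrightarrow> y \<in> dom0 \<Longrightarrow> f i y \<le> model xk i y"
  unfolding model_eq_quadratic
  by (intro lipschitz_gradient_le_quadratic[OF convex_dom0 _ _ f_deriv gradf_lipschitz])

lemma psi_le_psik:
  "i \<in> {1..m} \<Longrightarrow> xk \<in> dom0 \<Longrightarrow> y \<in> dom0 \<Longrightarrow> psi f chi i y \<le> psik f gradf L chi xk i y"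
  using f_le_model[of i xk y] by (simp add: psi_def psik_def)

lemma psik_self: "psik f gradf L chi xk i xk = psi f chi i xk"
  by (simp add: psik_def psi_def model_self)

lemma convex_on_psik: "i \<in> {1..m} \<Longrightarrow> convex_on UNIV (psik f gradf L chi xk i)"
  unfolding psik_def[abs_def] model_eq_quadratic
  using L_nonneg chi_convex by (intro convex_on_add convex_on_quadratic) auto

lemma continuous_on_psik: "i \<in> {1..m} \<Longrightarrow> continuous_on dom0 (psik f gradf L chi xk i)"
  unfolding psik_def[abs_def] qmodel_def using chi_cont by (intro continuous_intros) auto

lemma center_in_subfeas:
  "xk \<in> dom0 \<Longrightarrow> (\<And>i. i \<in> {1..m} \<Longrightarrow> psi f chi i xk \<le> ek i) \<Longrightarrow> xk \<in> subfeas xk ek"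
  by (simp add: sub_feas_def psik_self)

lemma subfeas_subset_feasible:
  assumes "xk \<in> dom0" "\<And>i. i \<in> {1..m} \<Longrightarrow> ek i \<le> eta i"
  shows "subfeas xk ek \<subseteq> feasible"
proof
  fix y assume "y \<in> subfeas xk ek"
  then have y: "y \<in> dom0" "\<And>i. i \<in> {1..m} \<Longrightarrow> psik f gradf L chi xk i y \<le> ek i"
    by (auto simp: sub_feas_def)
  have "psi f chi i y \<le> eta i" if "i \<in> {1..m}" for i
    using psi_le_psik[OF that assms(1) y(1)] y(2)[OF that] assms(2)[OF that] by linarith
  then show "y \<in> feasible" using y(1) by (simp add: feas_set_def)
qed

lemma compact_subfeas:
  assumes "xk \<in> dom0" "\<And>i. i \<in> {1..m} \<Longrightarrow> ek i \<le> eta i"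
  shows "compact (subfeas xk ek)"
proof -
  have feasible_dom0: "feasible \<subseteq> dom0" by (auto simp: feas_set_def)
  have "subfeas xk ek = feasible \<inter> (\<Inter>i\<in>{1..m}. feasible \<inter> psik f gradf L chi xk i -` {..ek i})"
    using subfeas_subset_feasible[OF assms] feasible_dom0 by (auto simp: sub_feas_def)
  also have "compact \<dots>"
    using feas_compact compact_imp_closed[OF feas_compact] feasible_dom0
    by (intro compact_Int_closed closed_INT ballI continuous_closed_preimage
        continuous_on_subset[OF continuous_on_psik]) auto
  finally show ?thesis .
qed

lemma convex_subfeas: "convex (subfeas xk ek)"
proof -
  have "subfeas xk ek = dom0 \<inter> (\<Inter>i\<in>{1..m}. {y\<in>UNIV. psik f gradf L chi xk i y \<le> ek i})"
    by (auto simp: sub_feas_def)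
  moreover have "convex {y\<in>UNIV. psik f gradf L chi xk i y \<le> ek i}" if "i \<in> {1..m}" for i
    using convex_on_psik[OF that] by (rule convex_sublevel_le)
  ultimately show ?thesis
    using convex_dom0 by (auto intro!: convex_Int convex_INT)
qed

lemma sub_min_exists:
  assumes "xk \<in> dom0" "\<And>i. i \<in> {1..m} \<Longrightarrow> psi f chi i xk \<le> ek i" "\<And>i. i \<in> {1..m} \<Longrightarrow> ek i \<le> eta i"
  obtains z where "submin xk ek z"
proof -
  let ?K = "subfeas xk ek" and ?h = "psi0k f gradf L chi0 xk"
  have "elsc ?h"
    unfolding psi0k_def[abs_def] qmodel_def
    using chi0_lsc by (intro elsc_add_continuous continuous_intros)
  then have "closed {x\<in>?K. ?h x \<le> c}" for c
    using compact_imp_closed[OF compact_subfeas[OF assms(1,3)]]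
    by (simp add: elsc_def Collect_conj_eq closed_Int)
  then obtain z where "z \<in> ?K" "\<And>y. y \<in> ?K \<Longrightarrow> ?h z \<le> ?h y"
    using compact_closed_sublevels_attains_min[OF compact_subfeas[OF assms(1,3)]]
      center_in_subfeas[OF assms(1,2)] by blast
  then show ?thesis using that by (auto simp: sub_min_def)
qed

lemma subfeas_dom0: "subfeas xk ek \<subseteq> dom0"
  by (auto simp: sub_feas_def)

lemma sub_minD:
  assumes "submin xk ek z" "y \<in> subfeas xk ek"
  shows "z \<in> subfeas xk ek" "model xk 0 z + chi0r z \<le> model xk 0 y + chi0r y"
proof -
  show z: "z \<in> subfeas xk ek" using assms(1) by (simp add: sub_min_def)
  have "psi0k f gradf L chi0 xk z \<le> psi0k f gradf L chi0 xk y"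
    using assms by (simp add: sub_min_def)
  moreover have "z \<in> dom0" "y \<in> dom0" using z assms(2) subfeas_dom0 by blast+
  ultimately show "model xk 0 z + chi0r z \<le> model xk 0 y + chi0r y" by (simp add: psi0k_eq)
qed

lemma sub_min_psi_le:
  assumes "submin xk ek z" "xk \<in> dom0"
  shows "z \<in> dom0" "\<And>i. i \<in> {1..m} \<Longrightarrow> psi f chi i z \<le> ek i"
proof -
  have z: "z \<in> subfeas xk ek" using assms(1) by (simp add: sub_min_def)
  then show "z \<in> dom0" using subfeas_dom0 by blast
  show "psi f chi i z \<le> ek i" if "i \<in> {1..m}" for i
  proof -
    have "psik f gradf L chi xk i z \<le> ek i" using z that by (simp add: sub_feas_def)
    then show ?thesis using psi_le_psik[OF that assms(2) \<open>z \<in> dom0\<close>] by linarith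
  qed
qed

lemma sub_min_decrease:
  assumes "submin xk ek z" "xk \<in> subfeas xk ek"
  shows "f 0 z + chi0r z + L 0 / 2 * (norm (z - xk))\<^sup>2 \<le> f 0 xk + chi0r xk"
proof -
  have z: "z \<in> subfeas xk ek" using sub_minD(1)[OF assms] .
  have "model xk 0 z + chi0r z + L 0 / 2 * (norm (xk - z))\<^sup>2 \<le> model xk 0 xk + chi0r xk"
    unfolding model_eq_quadratic
    using sub_minD(2)[OF assms(1)] subfeas_dom0 convex_subfeas z assms(2)
    by (intro quadratic_plus_convex_min_three_point convex_on_subset[OF convex_on_chi0r])
      (auto simp: model_eq_quadratic)
  moreover have "f 0 z \<le> model xk 0 z"
    using f_le_model[of 0 xk z] z assms(2) subfeas_dom0 by auto
  ultimately show ?thesis by (simp add: model_self norm_minus_commute)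
qed

lemma esubdiff_chi0I:
  assumes "z \<in> dom0" "\<And>y. y \<in> dom0 \<Longrightarrow> chi0r z + g \<bullet> (y - z) \<le> chi0r y"
  shows "g \<in> esubdiff chi0 z"
  unfolding esubdiff_def
proof (intro CollectI allI)
  fix y
  show "chi0 z + ereal (g \<bullet> (y - z)) \<le> chi0 y"
  proof (cases "y \<in> dom0")
    case True
    then show ?thesis using assms by (simp add: chi0_eq_ereal)
  qed (simp add: edom_def)
qed

lemma sub_min_lagrangian_min:
  assumes xk: "xk \<in> dom0" and slater: "\<And>i. i \<in> {1..m} \<Longrightarrow> psi f chi i xk < ek i"
    and z: "submin xk ek z"
  obtains lam where "\<And>i. i \<in> {1..m} \<Longrightarrow> 0 \<le> lam i"
    "\<And>i. i \<in> {1..m} \<Longrightarrow> lam i * (psik f gradf L chi xk i z - ek i) = 0"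
    "\<And>y. y \<in> dom0 \<Longrightarrow> model xk 0 z + chi0r z
       \<le> model xk 0 y + chi0r y + (\<Sum>i\<in>{1..m}. lam i * (psik f gradf L chi xk i y - ek i))"
proof -
  have z_sub: "z \<in> subfeas xk ek" using z by (simp add: sub_min_def)
  have "convex_on dom0 (\<lambda>y. model xk 0 y + chi0r y)"
    unfolding model_eq_quadratic using convex_dom0 L_nonneg[of 0]
    by (intro convex_on_add convex_on_quadratic convex_on_chi0r) auto
  moreover have "convex_on dom0 (\<lambda>y. psik f gradf L chi xk i y - ek i)" if "i \<in> {1..m}" for i
    using convex_on_subset[OF convex_on_psik[OF that] _ convex_dom0] convex_dom0
    by (intro convex_on_diff) (auto simp: concave_on_const)
  moreover have "model xk 0 z + chi0r z \<le> model xk 0 y + chi0r y"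
    if "y \<in> dom0" "\<forall>i\<in>{1..m}. psik f gradf L chi xk i y - ek i \<le> 0" for y
    using that sub_minD(2)[OF z] by (simp add: sub_feas_def)
  ultimately have "\<exists>lam. (\<forall>i\<in>{1..m}. 0 \<le> lam i \<and> lam i * (psik f gradf L chi xk i z - ek i) = 0)
    \<and> (\<forall>y\<in>dom0. model xk 0 z + chi0r z
      \<le> model xk 0 y + chi0r y + (\<Sum>i\<in>{1..m}. lam i * (psik f gradf L chi xk i y - ek i)))"
    using xk slater z_sub subfeas_dom0
    by (intro convex_slater_multipliers[OF _ convex_dom0, where a = xk])
      (auto simp: psik_self sub_feas_def)
  then show ?thesis using that by blast
qed

lemma lagrangian_split:
  "model xk 0 y + chi0r y + (\<Sum>i\<in>{1..m}. lam i * (psik f gradf L chi xk i y - ek i)) =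
    quadratic (f 0 xk + (\<Sum>i\<in>{1..m}. lam i * f i xk)) (gradf 0 xk + (\<Sum>i\<in>{1..m}. lam i *\<^sub>R gradf i xk))
      (L 0 + (\<Sum>i\<in>{1..m}. lam i * L i)) xk y
    + (chi0r y + (\<Sum>i\<in>{1..m}. lam i * chi i y)) - (\<Sum>i\<in>{1..m}. lam i * ek i)"
proof -
  have "(\<Sum>i\<in>{1..m}. lam i * (psik f gradf L chi xk i y - ek i)) =
      (\<Sum>i\<in>{1..m}. lam i * model xk i y) + (\<Sum>i\<in>{1..m}. lam i * chi i y) - (\<Sum>i\<in>{1..m}. lam i * ek i)"
    by (simp add: psik_def algebra_simps sum.distrib sum_subtractf)
  moreover have "model xk 0 y + (\<Sum>i\<in>{1..m}. lam i * model xk i y) =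
      quadratic (f 0 xk + (\<Sum>i\<in>{1..m}. lam i * f i xk)) (gradf 0 xk + (\<Sum>i\<in>{1..m}. lam i *\<^sub>R gradf i xk))
        (L 0 + (\<Sum>i\<in>{1..m}. lam i * L i)) xk y"
    unfolding model_eq_quadratic quadratic_sum[OF finite_atLeastAtMost] quadratic_add ..
  ultimately show ?thesis by simp
qed

definition lagrangian_grad :: "'a \<Rightarrow> (nat \<Rightarrow> real) \<Rightarrow> 'a \<Rightarrow> 'a" where
  "lagrangian_grad xk lam z = gradf 0 xk + L 0 *\<^sub>R (z - xk)
     + (\<Sum>i\<in>{1..m}. lam i *\<^sub>R (gradf i xk + L i *\<^sub>R (z - xk)))"

lemma lagrangian_grad_eq:
  "lagrangian_grad xk lam z = (gradf 0 xk + (\<Sum>i\<in>{1..m}. lam i *\<^sub>R gradf i xk))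
     + (L 0 + (\<Sum>i\<in>{1..m}. lam i * L i)) *\<^sub>R (z - xk)"
  by (simp add: lagrangian_grad_def scaleR_add_right scaleR_add_left sum.distrib scaleR_sum_left)

lemma lagrangian_min_linearized:
  assumes z: "z \<in> dom0" and lam: "\<And>i. i \<in> {1..m} \<Longrightarrow> 0 \<le> lam i"
    and slack: "\<And>i. i \<in> {1..m} \<Longrightarrow> lam i * (psik f gradf L chi xk i z - ek i) = 0"
    and min: "\<And>y. y \<in> dom0 \<Longrightarrow> model xk 0 z + chi0r z
      \<le> model xk 0 y + chi0r y + (\<Sum>i\<in>{1..m}. lam i * (psik f gradf L chi xk i y - ek i))"
    and y: "y \<in> dom0"
  shows "chi0r z + lagrangian_grad xk lam z \<bullet> z + (\<Sum>i\<in>{1..m}. lam i * chi i z)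
    \<le> chi0r y + lagrangian_grad xk lam z \<bullet> y + (\<Sum>i\<in>{1..m}. lam i * chi i y)"
proof -
  define Q where "Q = quadratic (f 0 xk + (\<Sum>i\<in>{1..m}. lam i * f i xk))
    (gradf 0 xk + (\<Sum>i\<in>{1..m}. lam i *\<^sub>R gradf i xk)) (L 0 + (\<Sum>i\<in>{1..m}. lam i * L i)) xk"
  define H where "H w = chi0r w + (\<Sum>i\<in>{1..m}. lam i * chi i w)" for w
  have "convex_on dom0 (\<lambda>w. \<Sum>i\<in>{1..m}. lam i * chi i w)"
    using chi_convex lam convex_dom0
    by (intro convex_on_weighted_sum) (auto intro: convex_on_subset)
  then have H_convex: "convex_on dom0 H"
    unfolding H_def by (intro convex_on_add convex_on_chi0r)
  have "(\<Sum>i\<in>{1..m}. lam i * (psik f gradf L chi xk i z - ek i)) = 0"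
    using slack by (intro sum.neutral) blast
  then have "Q z + H z \<le> Q w + H w" if "w \<in> dom0" for w
    using min[OF that] lagrangian_split[of xk z lam ek] lagrangian_split[of xk w lam ek]
    by (simp add: Q_def H_def)
  then have "H z - lagrangian_grad xk lam z \<bullet> (y - z) \<le> H y"
    unfolding lagrangian_grad_eq Q_def
    by (rule quadratic_plus_convex_min_variational_ineq[OF convex_dom0 H_convex z y])
  then show ?thesis by (simp add: H_def inner_diff_right)
qed

lemma lagrangian_min_imp_sub_multiplier:
  assumes z: "z \<in> dom0" and lam: "\<And>i. i \<in> {1..m} \<Longrightarrow> 0 \<le> lam i"
    and slack: "\<And>i. i \<in> {1..m} \<Longrightarrow> lam i * (psik f gradf L chi xk i z - ek i) = 0"
    and min: "\<And>y. y \<in> dom0 \<Longrightarrow> model xk 0 z + chi0r z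
      \<le> model xk 0 y + chi0r y + (\<Sum>i\<in>{1..m}. lam i * (psik f gradf L chi xk i y - ek i))"
  shows "sub_multiplier f gradf L chi0 chi m xk ek z lam"
proof -
  let ?G = "lagrangian_grad xk lam z"
  have "\<exists>g0 g. (\<forall>y\<in>dom0. chi0r z + g0 \<bullet> (y - z) \<le> chi0r y)
      \<and> (\<forall>i\<in>{1..m}. \<forall>y. chi i z + g i \<bullet> (y - z) \<le> chi i y)
      \<and> ?G + g0 + (\<Sum>i\<in>{1..m}. lam i *\<^sub>R g i) = 0"
    using lagrangian_min_linearized[OF assms]
    by (intro convex_subgradient_sum_rule_finite[OF _ convex_dom0 convex_on_chi0r z chi_convex lam]) auto
  then obtain g0 g where g0: "\<forall>y\<in>dom0. chi0r z + g0 \<bullet> (y - z) \<le> chi0r y"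
    and g: "\<forall>i\<in>{1..m}. \<forall>y. chi i z + g i \<bullet> (y - z) \<le> chi i y"
    and zero: "?G + g0 + (\<Sum>i\<in>{1..m}. lam i *\<^sub>R g i) = 0"
    by blast
  have "(\<Sum>i\<in>{1..m}. lam i *\<^sub>R (gradf i xk + L i *\<^sub>R (z - xk) + g i))
      = (\<Sum>i\<in>{1..m}. lam i *\<^sub>R (gradf i xk + L i *\<^sub>R (z - xk))) + (\<Sum>i\<in>{1..m}. lam i *\<^sub>R g i)"
    by (simp add: scaleR_add_right sum.distrib)
  then have "gradf 0 xk + L 0 *\<^sub>R (z - xk) + g0
      + (\<Sum>i\<in>{1..m}. lam i *\<^sub>R (gradf i xk + L i *\<^sub>R (z - xk) + g i))
      = ?G + g0 + (\<Sum>i\<in>{1..m}. lam i *\<^sub>R g i)"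
    by (simp add: lagrangian_grad_def ac_simps)
  also have "\<dots> = 0" by (rule zero)
  finally have "gradf 0 xk + L 0 *\<^sub>R (z - xk) + g0
      + (\<Sum>i\<in>{1..m}. lam i *\<^sub>R (gradf i xk + L i *\<^sub>R (z - xk) + g i)) = 0" .
  moreover have "g0 \<in> esubdiff chi0 z" using g0 z by (intro esubdiff_chi0I) auto
  moreover have "\<forall>i\<in>{1..m}. g i \<in> esubdiff (\<lambda>y. ereal (chi i y)) z"
    using g by (simp add: esubdiff_def)
  ultimately show ?thesis
    using lam slack unfolding sub_multiplier_def by blast
qed

lemma sub_min_multiplier:
  assumes "xk \<in> dom0" "\<And>i. i \<in> {1..m} \<Longrightarrow> psi f chi i xk < ek i" "submin xk ek z"
  shows "\<exists>lam. sub_multiplier f gradf L chi0 chi m xk ek z lam"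
proof -
  obtain lam where "\<And>i. i \<in> {1..m} \<Longrightarrow> 0 \<le> lam i"
    "\<And>i. i \<in> {1..m} \<Longrightarrow> lam i * (psik f gradf L chi xk i z - ek i) = 0"
    "\<And>y. y \<in> dom0 \<Longrightarrow> model xk 0 z + chi0r z
       \<le> model xk 0 y + chi0r y + (\<Sum>i\<in>{1..m}. lam i * (psik f gradf L chi xk i y - ek i))"
    using sub_min_lagrangian_min[OF assms] by blast
  then show ?thesis
    using lagrangian_min_imp_sub_multiplier[OF sub_min_psi_le(1)[OF assms(3,1)]] by blast
qed

end

locale lcpg = lcpg_problem +
  fixes x0 :: 'a and etas :: "nat \<Rightarrow> nat \<Rightarrow> real"
  assumes x0_dom: "x0 \<in> edom chi0"
    and x0_strict: "\<And>i. i \<in> {1..m} \<Longrightarrow> psi f chi i x0 < etas 0 i"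
    and etas_increasing: "\<And>k i. i \<in> {1..m} \<Longrightarrow> etas k i < etas (Suc k) i"
    and etas_below: "\<And>k i. i \<in> {1..m} \<Longrightarrow> etas k i < eta i"
begin

definition strictly_feasible :: "nat \<Rightarrow> 'a \<Rightarrow> bool" where
  "strictly_feasible k xk \<longleftrightarrow> xk \<in> dom0 \<and> (\<forall>i\<in>{1..m}. psi f chi i xk < etas k i)"

definition iterates :: "(nat \<Rightarrow> 'a) \<Rightarrow> bool" where
  "iterates x \<longleftrightarrow> x 0 = x0 \<and> (\<forall>k. submin (x k) (etas k) (x (Suc k)))"

lemma strictly_feasible_sub_min_exists:
  assumes "strictly_feasible k xk"
  obtains z where "submin xk (etas k) z"
proof (rule sub_min_exists)
  show "xk \<in> dom0" using assms by (simp add: strictly_feasible_def)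
  show "psi f chi i xk \<le> etas k i" if "i \<in> {1..m}" for i
    using assms that by (auto simp: strictly_feasible_def less_imp_le)
  show "etas k i \<le> eta i" if "i \<in> {1..m}" for i
    using etas_below[OF that] by (rule less_imp_le)
qed (use that in blast)

lemma sub_min_strictly_feasible:
  "strictly_feasible k xk \<Longrightarrow> submin xk (etas k) z \<Longrightarrow> strictly_feasible (Suc k) z"
  using sub_min_psi_le[of xk "etas k" z] etas_increasing
  by (fastforce simp: strictly_feasible_def intro: le_less_trans)

lemma strictly_feasible_induct:
  assumes "x 0 = x0" "\<And>k. strictly_feasible k (x k) \<Longrightarrow> submin (x k) (etas k) (x (Suc k))"
  shows "strictly_feasible k (x k)"
proof (induction k)
  case 0
  then show ?case using assms(1) x0_dom x0_strict by (simp add: strictly_feasible_def)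
next
  case (Suc k)
  then show ?case using assms(2) sub_min_strictly_feasible by blast
qed

lemma iterates_strictly_feasible: "iterates x \<Longrightarrow> strictly_feasible k (x k)"
  by (rule strictly_feasible_induct) (auto simp: iterates_def)

lemma iterates_exist: "\<exists>x. iterates x"
proof -
  define x where "x = rec_nat x0 (\<lambda>k xk. SOME z. submin xk (etas k) z)"
  have step: "submin (x k) (etas k) (x (Suc k))" if "strictly_feasible k (x k)" for k
    using strictly_feasible_sub_min_exists[OF that] unfolding x_def by (auto intro: someI)
  have "x 0 = x0" by (simp add: x_def)
  then have "iterates x"
    using step strictly_feasible_induct[of x] by (simp add: iterates_def)
  then show ?thesis by blast
qed

lemma iterates_dom0: "iterates x \<Longrightarrow> x k \<in> dom0"
  using iterates_strictly_feasible by (simp add: strictly_feasible_def)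

lemma iterates_center_in_subfeas: "iterates x \<Longrightarrow> x k \<in> subfeas (x k) (etas k)"
  using iterates_strictly_feasible[of x k]
  by (intro center_in_subfeas) (auto simp: strictly_feasible_def less_imp_le)

lemma iterates_feasible: "iterates x \<Longrightarrow> x k \<in> feasible"
  using iterates_strictly_feasible[of x k] etas_below[of _ k]
  by (fastforce simp: strictly_feasible_def feas_set_def intro: less_imp_le less_trans)

lemma iterates_descent:
  assumes "iterates x"
  shows "ereal (L 0 / 2 * (norm (x (Suc k) - x k))\<^sup>2) \<le> psi0 f chi0 (x k) - psi0 f chi0 (x (Suc k))"
proof -
  have "submin (x k) (etas k) (x (Suc k))" using assms by (simp add: iterates_def)
  then have "f 0 (x (Suc k)) + chi0r (x (Suc k)) + L 0 / 2 * (norm (x (Suc k) - x k))\<^sup>2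
      \<le> f 0 (x k) + chi0r (x k)"
    using sub_min_decrease iterates_center_in_subfeas[OF assms] by blast
  then show ?thesis
    using iterates_dom0[OF assms] by (simp add: psi0_eq)
qed

lemma iterates_objective_decseq:
  assumes "iterates x"
  shows "decseq (\<lambda>k. psi0 f chi0 (x k))"
proof (rule decseq_SucI)
  fix k
  have "0 \<le> L 0 / 2 * (norm (x (Suc k) - x k))\<^sup>2" using L_nonneg[of 0] by simp
  then show "psi0 f chi0 (x (Suc k)) \<le> psi0 f chi0 (x k)"
    using iterates_descent[OF assms, of k] iterates_dom0[OF assms] by (simp add: psi0_eq)
qed

lemma iterates_objective_convergent:
  assumes "iterates x" and bounded: "\<bar>(INF y\<in>feasible. psi0 f chi0 y)\<bar> \<noteq> \<infinity>"
  obtains l :: real where "(\<lambda>k. psi0 f chi0 (x k)) \<longlonglongrightarrow> ereal l"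
proof -
  obtain V where V: "(INF y\<in>feasible. psi0 f chi0 y) = ereal V"
    using bounded by (cases "INF y\<in>feasible. psi0 f chi0 y") auto
  define r where "r k = f 0 (x k) + chi0r (x k)" for k
  have psi0_r: "psi0 f chi0 (x k) = ereal (r k)" for k
    using iterates_dom0[OF assms(1)] by (simp add: r_def psi0_eq)
  have "decseq r" using iterates_objective_decseq[OF assms(1)] by (simp add: psi0_r decseq_def)
  moreover have "V \<le> r k" for k
    using INF_lower[OF iterates_feasible[OF assms(1)], of "psi0 f chi0"] by (simp add: V psi0_r)
  ultimately obtain l where "r \<longlonglongrightarrow> l" using decseq_convergent by blast
  then show ?thesis using that by (simp add: psi0_r tendsto_ereal)
qed

lemma iterates_multiplier:
  "iterates x \<Longrightarrow> \<exists>lam. sub_multiplier f gradf L chi0 chi m (x k) (etas k) (x (Suc k)) lam"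
  using iterates_strictly_feasible[of x k]
  by (intro sub_min_multiplier) (auto simp: iterates_def strictly_feasible_def)

end

theorem mainTheorem3:
  fixes f :: "nat \<Rightarrow> 'a::euclidean_space \<Rightarrow> real"
    and gradf :: "nat \<Rightarrow> 'a \<Rightarrow> 'a"
    and L :: "nat \<Rightarrow> real"
    and chi0 :: "'a \<Rightarrow> ereal"
    and chi :: "nat \<Rightarrow> 'a \<Rightarrow> real"
    and eta :: "nat \<Rightarrow> real"
    and m :: nat
    and x0 :: 'a
    and etas :: "nat \<Rightarrow> nat \<Rightarrow> real"
  assumes chi0_proper: "proper_fun chi0"
    and chi0_convex: "econvex chi0"
    and chi0_lsc: "elsc chi0"
    and chi_convex: "\<forall>i\<in>{1..m}. convex_on UNIV (chi i)"
    and chi_cont: "\<forall>i\<in>{1..m}. continuous_on (edom chi0) (chi i)"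
    and f_diff: "\<forall>i\<in>{0..m}. \<forall>x\<in>edom chi0. (f i has_derivative (\<lambda>h. gradf i x \<bullet> h)) (at x)"
    and f_lip: "\<forall>i\<in>{0..m}. (L i)-lipschitz_on (edom chi0) (gradf i)"
    and opt_finite: "\<bar>(INF x\<in>feas_set f chi0 chi eta m. psi0 f chi0 x)\<bar> \<noteq> \<infinity>"
    and feas_nonempty: "feas_set f chi0 chi eta m \<noteq> {}"
    and feas_compact: "compact (feas_set f chi0 chi eta m)"
    and x0_dom: "x0 \<in> edom chi0"
    and x0_strict: "\<forall>i\<in>{1..m}. psi f chi i x0 < etas 0 i"
    and eta0_lt: "\<forall>i\<in>{1..m}. etas 0 i < eta i"
    and etas_step: "\<forall>k. \<forall>i\<in>{1..m}. etas k i < etas (Suc k) i \<and> etas (Suc k) i < eta i"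
  shows "(\<exists>x :: nat \<Rightarrow> 'a. x 0 = x0 \<and>
            (\<forall>k. sub_min f gradf L chi0 chi m (x k) (etas k) (x (Suc k))))
       \<and> (\<forall>x :: nat \<Rightarrow> 'a. x 0 = x0 \<and>
            (\<forall>k. sub_min f gradf L chi0 chi m (x k) (etas k) (x (Suc k))) \<longrightarrow>
              (\<forall>k. sub_feas f gradf L chi0 chi m (x k) (etas k) \<noteq> {})
            \<and> (\<forall>k. x k \<in> feas_set f chi0 chi eta m)
            \<and> (\<forall>k. ereal (L 0 / 2 * (norm (x (Suc k) - x k))\<^sup>2)
                     \<le> psi0 f chi0 (x k) - psi0 f chi0 (x (Suc k)))
            \<and> decseq (\<lambda>k. psi0 f chi0 (x k))
            \<and> (\<exists>l::real. (\<lambda>k. psi0 f chi0 (x k)) \<longlonglongrightarrow> ereal l)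
            \<and> (\<forall>k. \<exists>lam. sub_multiplier f gradf L chi0 chi m (x k) (etas k) (x (Suc k)) lam))"
proof -
  have etas_below: "etas k i < eta i" if "i \<in> {1..m}" for k i
    using eta0_lt etas_step that by (cases k) auto
  interpret lcpg f gradf L chi0 chi eta m x0 etas
    using chi0_proper chi0_convex chi0_lsc chi_convex chi_cont f_diff f_lip feas_compact
      x0_dom x0_strict etas_step etas_below
    by unfold_locales auto
  have iterates_iff: "iterates x \<longleftrightarrow> x 0 = x0 \<and> (\<forall>k. sub_min f gradf L chi0 chi m (x k) (etas k) (x (Suc k)))"
    for x by (simp add: iterates_def)
  show ?thesis
    unfolding iterates_iff[symmetric]
  proof (intro conjI allI impI)
    fix x assume x: "iterates x"
    show "sub_feas f gradf L chi0 chi m (x k) (etas k) \<noteq> {}" for k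
      using iterates_center_in_subfeas[OF x] by blast
    show "\<exists>l::real. (\<lambda>k. psi0 f chi0 (x k)) \<longlonglongrightarrow> ereal l"
      using iterates_objective_convergent[OF x opt_finite] by blast
  qed (use iterates_exist iterates_feasible iterates_descent iterates_objective_decseq
      iterates_multiplier in auto)
qed

end
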